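(* Let $N,M$ be integers with $0<M<N/2$. The maximal elements of the poset $\mathbf{Str}(N,M)$ are exactly the strings of dimension $N-2M$.
   Context: A circular symbol string of length $N$ is $s=s_1\cdots s_N$ with each $s_i\in\{0,1,X\}$, indices read cyclically modulo $N$; $0,1$ are called bits. A block of $s$ is a maximal cyclic run of consecutive equal symbols. $s$ is a circular cellular string of rank $M$ if it has exactly $M$ blocks of symbol $0$, exactly $M$ blocks of symbol $1$, and every block of symbol $X$ is cyclically preceded and followed by blocks of different bits (one of symbol $0$ and one of symbol $1$). Its dimension is its number of symbols $X$. $\mathbf{Str}(N,M)$ is the set of such strings, partially ordered by $s'<s$ iff $s$ is obtained from $s'$ by replacing some (at least one) of the bits of $s'$ by $X$. *)

theory Defs
  imports Main
begin

datatype sym = B0 | B1 | SX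

text \<open>A circular string of length N is a list of length N; indices are read modulo N.\<close>
definition cyc :: "sym list \<Rightarrow> nat \<Rightarrow> sym" where
  "cyc s i = s ! (i mod length s)"

text \<open>If the whole (nonempty)
  string is c, there is exactly one block; otherwise blocks correspond to their
  starting positions i (s_i = c, s_{i-1} \<noteq> c).\<close>
definition num_blocks :: "sym \<Rightarrow> sym list \<Rightarrow> nat" where
  "num_blocks c s =
     (if s \<noteq> [] \<and> (\<forall>i<length s. s ! i = c) then 1
      else card {i. i < length s \<and> cyc s i = c \<and> cyc s (i + length s - 1) \<noteq> c})"

text \<open>Every block of X is cyclically preceded and followed by blocks of different
  bits. An X-block starting at position i of length L is preceded by position i-1 and
  followed by position i+L; when the string is not entirely X these are bits.
  A string consisting only of X has a single X-block with no bit neighbours.\<close>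
definition X_blocks_ok :: "sym list \<Rightarrow> bool" where
  "X_blocks_ok s \<longleftrightarrow>
     ((\<forall>i<length s. s ! i = SX) \<longrightarrow> s = []) \<and>
     (\<forall>i L. i < length s \<and> 0 < L \<and> cyc s (i + length s - 1) \<noteq> SX \<and>
            (\<forall>j<L. cyc s (i + j) = SX) \<and> cyc s (i + L) \<noteq> SX
        \<longrightarrow> cyc s (i + length s - 1) \<noteq> cyc s (i + L))"

definition cellular :: "nat \<Rightarrow> nat \<Rightarrow> sym list \<Rightarrow> bool" where
  "cellular N M s \<longleftrightarrow> length s = N \<and> num_blocks B0 s = M \<and> num_blocks B1 s = M
     \<and> X_blocks_ok s"

definition Str :: "nat \<Rightarrow> nat \<Rightarrow> sym list set" where
  "Str N M = {s. cellular N M s}"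

definition dimension :: "sym list \<Rightarrow> nat" where
  "dimension s = card {i. i < length s \<and> s ! i = SX}"

definition str_less :: "sym list \<Rightarrow> sym list \<Rightarrow> bool" where
  "str_less s' s \<longleftrightarrow> length s' = length s \<and> s' \<noteq> s \<and>
     (\<forall>i<length s. s' ! i = s ! i \<or> (s' ! i \<noteq> SX \<and> s ! i = SX))"

definition maximal_in :: "sym list set \<Rightarrow> sym list \<Rightarrow> bool" where
  "maximal_in P s \<longleftrightarrow> s \<in> P \<and> \<not> (\<exists>t\<in>P. str_less s t)"

end

theory Submission
  imports Defs
begin

(* Every block of a bit contains at least one symbol, so a cellular string of rank M > 0 has
   dimension at most N - 2M; as s' < s strictly increases the dimension, strings of dimension
   N - 2M are maximal. Conversely, if the dimension is smaller, some bit b occurs more often than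
   it has blocks, so some b-block has length at least 2. Replacing the last symbol of that block
   by X keeps the number of blocks of each bit, and the new X either forms an X-block between b
   and the other bit, or it joins the X-block that followed, whose left neighbour was b and whose
   right neighbour therefore is the other bit. This yields a larger cellular string. *)

lemma cyc_nth: "i < length s \<Longrightarrow> cyc s i = s ! i"
  by (simp add: cyc_def)

lemma cyc_add_length: "cyc s (i + length s) = cyc s i"
  by (simp add: cyc_def)

lemma cyc_mod_add: "cyc s (i mod length s + k) = cyc s (i + k)"
  by (simp add: cyc_def mod_add_left_eq)

lemma cyc_mod: "cyc s (i mod length s) = cyc s i"
  using cyc_mod_add[of s i 0] by simp

lemma cyc_list_update:
  "j < length s \<Longrightarrow> cyc (s[j := x]) i = (if i mod length s = j then x else cyc s i)"
  by (simp add: cyc_def)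

lemma add_mod_neq:
  fixes j m n :: nat
  assumes "j < n" "0 < m" "m < n"
  shows "(j + m) mod n \<noteq> j"
proof (cases "j + m < n")
  case False
  then have "(j + m) mod n = j + m - n"
    using assms by (simp add: mod_if)
  then show ?thesis using assms False by simp
qed (use assms in simp)

definition occurrences :: "sym \<Rightarrow> sym list \<Rightarrow> nat set" where
  "occurrences c s = {i. i < length s \<and> s ! i = c}"

definition block_starts :: "sym \<Rightarrow> sym list \<Rightarrow> nat set" where
  "block_starts c s = {i. i < length s \<and> cyc s i = c \<and> cyc s (i + length s - 1) \<noteq> c}"

lemma dimension_eq_card_occurrences: "dimension s = card (occurrences SX s)"
  by (simp add: dimension_def occurrences_def)

lemma block_starts_subset_occurrences: "block_starts c s \<subseteq> occurrences c s"
  by (auto simp: block_starts_def occurrences_def cyc_nth)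

lemma num_blocks_eq_card_block_starts:
  "\<exists>i<length s. s ! i \<noteq> c \<Longrightarrow> num_blocks c s = card (block_starts c s)"
  by (auto simp: num_blocks_def block_starts_def)

lemma finite_occurrences [simp]: "finite (occurrences c s)"
  by (simp add: occurrences_def)

lemma card_occurrences_sum:
  "card (occurrences SX s) + card (occurrences B0 s) + card (occurrences B1 s) = length s"
proof -
  have "{..<length s} = occurrences SX s \<union> (occurrences B0 s \<union> occurrences B1 s)"
    by (auto simp: occurrences_def intro: sym.exhaust)
  moreover have "occurrences B0 s \<inter> occurrences B1 s = {}"
    and "occurrences SX s \<inter> (occurrences B0 s \<union> occurrences B1 s) = {}"
    by (auto simp: occurrences_def)
  ultimately have "length s = card (occurrences SX s) + (card (occurrences B0 s) + card (occurrences B1 s))"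
    by (metis card_lessThan card_Un_disjoint finite_Un finite_occurrences)
  then show ?thesis by simp
qed

lemma cellular_length: "cellular N M s \<Longrightarrow> length s = N"
  by (simp add: cellular_def)

lemma cellular_num_blocks: "cellular N M s \<Longrightarrow> c \<noteq> SX \<Longrightarrow> num_blocks c s = M"
  by (cases c) (auto simp: cellular_def)

lemma cellular_not_constant:
  assumes "cellular N M s" "0 < M" "c \<noteq> SX"
  shows "\<exists>i<length s. s ! i \<noteq> c"
proof (rule ccontr)
  assume const: "\<not> ?thesis"
  obtain c' where c': "c' \<noteq> c" "c' \<noteq> SX"
    using \<open>c \<noteq> SX\<close> by (cases c) auto
  have "s \<noteq> []"
    using cellular_num_blocks[OF assms(1) \<open>c \<noteq> SX\<close>] \<open>0 < M\<close>
    by (auto simp: num_blocks_def)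
  then have "\<exists>i<length s. s ! i \<noteq> c'"
    using const c'(1) by (intro exI[of _ 0]) auto
  then have "num_blocks c' s = card (block_starts c' s)"
    by (rule num_blocks_eq_card_block_starts)
  also have "block_starts c' s = {}"
    using const c' by (auto simp: block_starts_def cyc_nth)
  finally show False
    using cellular_num_blocks[OF assms(1) c'(2)] \<open>0 < M\<close> by simp
qed

lemma cellular_card_block_starts:
  "cellular N M s \<Longrightarrow> 0 < M \<Longrightarrow> c \<noteq> SX \<Longrightarrow> card (block_starts c s) = M"
  using num_blocks_eq_card_block_starts cellular_not_constant cellular_num_blocks by metis

lemma cellular_card_occurrences_ge:
  assumes "cellular N M s" "0 < M" "c \<noteq> SX"
  shows "M \<le> card (occurrences c s)"
  using card_mono[OF finite_occurrences block_starts_subset_occurrences, of c s]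
    cellular_card_block_starts[OF assms] by simp

lemma cellular_dimension_le:
  assumes "cellular N M s" "0 < M"
  shows "dimension s + 2 * M \<le> N"
  using card_occurrences_sum[of s] cellular_length[OF assms(1)]
    cellular_card_occurrences_ge[OF assms, of B0] cellular_card_occurrences_ge[OF assms, of B1]
  by (simp add: dimension_eq_card_occurrences)

lemma str_less_dimension_less:
  assumes "str_less s t"
  shows "dimension s < dimension t"
proof -
  have len: "length s = length t" and step: "\<forall>i<length t. s ! i = t ! i \<or> s ! i \<noteq> SX \<and> t ! i = SX"
    using assms by (auto simp: str_less_def)
  obtain k where k: "k < length t" "s ! k \<noteq> t ! k"
    using assms len nth_equalityI by (metis str_less_def)
  have "occurrences SX s \<subset> occurrences SX t"
    using len step k by (force simp: occurrences_def)
  then show ?thesis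
    by (simp add: dimension_eq_card_occurrences psubset_card_mono occurrences_def)
qed

definition long_block_end :: "sym list \<Rightarrow> nat \<Rightarrow> bool" where
  "long_block_end s j \<longleftrightarrow>
     j < length s \<and> cyc s (j + length s - 1) = s ! j \<and> cyc s (j + 1) \<noteq> s ! j"

lemma long_block_end_length: "long_block_end s j \<Longrightarrow> 2 \<le> length s"
  by (cases "length s = 1") (auto simp: long_block_end_def cyc_def)

lemma exists_long_block_end:
  assumes not_const: "\<exists>i<length s. s ! i \<noteq> c"
    and more: "card (block_starts c s) < card (occurrences c s)"
  shows "\<exists>j. long_block_end s j \<and> s ! j = c"
proof (rule ccontr)
  assume no_end: "\<not> ?thesis"
  define n where "n = length s"
  have "\<not> occurrences c s \<subseteq> block_starts c s"
    using more card_mono[of "block_starts c s" "occurrences c s"]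
    by (auto simp: block_starts_def)
  then obtain j0 where j0: "j0 < n" "cyc s j0 = c" "cyc s (j0 + n - 1) = c"
    by (auto simp: occurrences_def block_starts_def cyc_nth n_def)
  have step: "cyc s (i + 1) = c" if "cyc s i = c" "cyc s (i + n - 1) = c" for i
  proof -
    have i: "i mod n < n"
      using j0(1) by simp
    then have "s ! (i mod n) = c"
      using that(1) cyc_mod[of s i] cyc_nth[of "i mod n" s] by (simp add: n_def)
    moreover have "cyc s (i mod n + n - 1) = c"
      using that(2) cyc_mod_add[of s i "n - 1"] j0(1) by (simp add: n_def)
    moreover have "\<not> long_block_end s (i mod n)"
      using no_end \<open>s ! (i mod n) = c\<close> by blast
    ultimately have "cyc s (i mod n + 1) = c"
      using i by (simp add: long_block_end_def n_def)
    then show ?thesis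
      using cyc_mod_add[of s i 1] by (simp add: n_def)
  qed
  have run: "cyc s (j0 + k) = c \<and> cyc s (j0 + k + n - 1) = c" for k
  proof (induction k)
    case (Suc k)
    then show ?case
      using step[of "j0 + k"] cyc_add_length[of s "j0 + k"] j0(1) by (simp add: n_def)
  qed (use j0 in simp)
  have "s ! i = c" if "i < n" for i
    using run[of "i + n - j0"] cyc_add_length[of s i] cyc_nth[of i s] that j0(1)
    by (simp add: n_def)
  then show False
    using not_const by (auto simp: n_def)
qed

lemma cellular_exists_long_block_end:
  assumes c: "cellular N M s" and "0 < M" and small: "dimension s + 2 * M < N"
  shows "\<exists>j. long_block_end s j \<and> s ! j \<noteq> SX"
proof -
  have "M < card (occurrences B0 s) \<or> M < card (occurrences B1 s)"
    using card_occurrences_sum[of s] cellular_length[OF c] small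
    unfolding dimension_eq_card_occurrences by linarith
  then obtain b where b: "b \<noteq> SX" "M < card (occurrences b s)"
    by (elim disjE) auto
  then obtain j where "long_block_end s j" "s ! j = b"
    using exists_long_block_end cellular_not_constant[OF c \<open>0 < M\<close> b(1)]
      cellular_card_block_starts[OF c \<open>0 < M\<close> b(1)]
    by metis
  with b show ?thesis
    by auto
qed

lemma cyc_list_update_shift:
  assumes "j < length s" "0 < m" "m < length s"
  shows "cyc (s[j := x]) (j + m) = cyc s (j + m)"
  using assms add_mod_neq[of j "length s" m] by (simp add: cyc_list_update)

lemma cyc_update_long_block_end_pred:
  assumes "long_block_end s j"
  shows "cyc (s[j := SX]) (j + length s - 1) = s ! j"
proof -
  have "j < length s" and "2 \<le> length s"
    using assms long_block_end_length by (auto simp: long_block_end_def)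
  then show ?thesis
    using cyc_list_update_shift[of j s "length s - 1" SX] assms
    by (simp add: long_block_end_def)
qed

lemma block_starts_update_long_block_end:
  assumes block_end: "long_block_end s j" and "c \<noteq> SX"
  shows "block_starts c (s[j := SX]) = block_starts c s"
proof -
  define n where "n = length s"
  have j: "j < n" and n2: "2 \<le> n"
    and pred_j: "cyc s (j + n - 1) = s ! j" and succ_j: "cyc s (j + 1) \<noteq> s ! j"
    using block_end long_block_end_length by (auto simp: long_block_end_def n_def)
  have ct: "cyc (s[j := SX]) i = (if i mod n = j then SX else cyc s i)" for i
    using j cyc_list_update by (simp add: n_def)
  have "i \<in> block_starts c (s[j := SX]) \<longleftrightarrow> i \<in> block_starts c s" if "i < n" for i
  proof -
    consider "i = j" | "(i + n - 1) mod n = j" | "i \<noteq> j" "(i + n - 1) mod n \<noteq> j"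
      by blast
    then show ?thesis
    proof cases
      case 1
      then show ?thesis
        using ct pred_j j \<open>c \<noteq> SX\<close> cyc_nth[of j s] by (auto simp: block_starts_def n_def)
    next
      case 2
      have "cyc s (j + 1) = cyc s (i + n - 1 + 1)"
        using cyc_mod_add[of s "i + n - 1" 1] 2 by (simp add: n_def)
      also have "\<dots> = cyc s (i + n)"
        using n2 by (simp add: Suc_diff_le)
      also have "\<dots> = cyc s i"
        using cyc_add_length[of s i] by (simp add: n_def)
      finally have succ: "cyc s i = cyc s (j + 1)" ..
      have pred: "cyc s (i + n - 1) = s ! j"
        using cyc_mod[of s "i + n - 1"] cyc_nth[of j s] 2 j by (simp add: n_def)
      have "i \<noteq> j"
        using 2 add_mod_neq[of j n "n - 1"] j n2 by auto
      then show ?thesis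
        using ct that 2 succ pred succ_j \<open>c \<noteq> SX\<close> by (auto simp: block_starts_def n_def)
    next
      case 3
      then show ?thesis
        using ct that by (auto simp: block_starts_def n_def)
    qed
  qed
  then show ?thesis
    by (auto simp: block_starts_def n_def)
qed

lemma num_blocks_update_long_block_end:
  assumes block_end: "long_block_end s j" and bit: "s ! j \<noteq> SX" and "c \<noteq> SX"
  shows "num_blocks c (s[j := SX]) = num_blocks c s"
proof -
  have j: "j < length s"
    using block_end by (simp add: long_block_end_def)
  have "\<exists>i<length s. s ! i \<noteq> c"
  proof (rule ccontr)
    assume "\<not> ?thesis"
    moreover have "(j + 1) mod length s < length s"
      using j by (metis gr_implies_not0 mod_less_divisor not_gr_zero)
    ultimately have "s ! ((j + 1) mod length s) = c" and "s ! j = c"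
      using j by blast+
    then show False
      using block_end by (simp add: long_block_end_def cyc_def)
  qed
  moreover have "\<exists>i<length (s[j := SX]). s[j := SX] ! i \<noteq> c"
    using j \<open>c \<noteq> SX\<close> by (intro exI[of _ j]) simp
  ultimately show ?thesis
    using block_starts_update_long_block_end[OF block_end \<open>c \<noteq> SX\<close>]
    by (simp add: num_blocks_eq_card_block_starts)
qed

lemma X_blocks_okD:
  assumes ok: "X_blocks_ok s" and "s \<noteq> []" "0 < L"
    and "cyc s (i + length s - 1) \<noteq> SX" "\<forall>k<L. cyc s (i + k) = SX" "cyc s (i + L) \<noteq> SX"
  shows "cyc s (i + length s - 1) \<noteq> cyc s (i + L)"
proof -
  define i' where "i' = i mod length s"
  have shift: "cyc s (i' + k) = cyc s (i + k)" for k
    unfolding i'_def by (rule cyc_mod_add)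
  have "0 < length s"
    using \<open>s \<noteq> []\<close> by simp
  then have "i' < length s" and "cyc s (i' + length s - 1) = cyc s (i + length s - 1)"
    using shift[of "length s - 1"] by (simp_all add: i'_def Suc_le_eq)
  with assms show ?thesis
    unfolding X_blocks_ok_def by (metis shift)
qed

lemma X_run_through_update_starts_there:
  assumes block_end: "long_block_end s j" and bit: "s ! j \<noteq> SX"
    and run: "\<forall>k<L. cyc (s[j := SX]) (i + k) = SX" and k: "k < L" "(i + k) mod length s = j"
  shows "k = 0"
proof (rule ccontr)
  define t where "t = s[j := SX]"
  assume "k \<noteq> 0"
  moreover have "2 \<le> length t"
    using block_end long_block_end_length by (simp add: t_def)
  ultimately have "i + k + (length t - 1) = i + (k - 1) + length t"
    by simp
  then have "cyc t (i + (k - 1)) = cyc t (i + k + (length t - 1))"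
    using cyc_add_length[of t "i + (k - 1)"] by (simp only:)
  also have "\<dots> = cyc t (j + length s - 1)"
    using cyc_mod_add[of t "i + k" "length t - 1"] k(2) \<open>2 \<le> length t\<close> by (simp add: t_def)
  also have "\<dots> = s ! j"
    using cyc_update_long_block_end_pred[OF block_end] by (simp add: t_def)
  finally show False
    using run k(1) bit by (simp add: t_def)
qed

lemma X_block_after_update_long_block_end:
  assumes ok: "X_blocks_ok s" and block_end: "long_block_end s j" and bit: "s ! j \<noteq> SX"
    and L: "0 < L" and run: "\<forall>k<L. cyc (s[j := SX]) (j + k) = SX"
    and right: "cyc (s[j := SX]) (j + L) \<noteq> SX"
  shows "cyc (s[j := SX]) (j + L) \<noteq> s ! j"
proof -
  define n where "n = length s"
  define t where "t = s[j := SX]"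
  have j: "j < n" and n2: "2 \<le> n" and pred_j: "cyc s (j + n - 1) = s ! j"
    and succ_j: "cyc s (j + 1) \<noteq> s ! j"
    using block_end long_block_end_length by (auto simp: long_block_end_def n_def)
  have other: "cyc t (j + m) = cyc s (j + m)" if "0 < m" "m < n" for m
    using that j cyc_list_update_shift by (simp add: t_def n_def)
  have "L < n"
  proof (rule ccontr)
    assume "\<not> L < n"
    then have "cyc t (j + (n - 1)) = SX"
      using run[rule_format, of "n - 1"] n2 by (simp add: t_def)
    then show False
      using other[of "n - 1"] pred_j bit n2 by simp
  qed
  then have right_s: "cyc t (j + L) = cyc s (j + L)"
    using other L by simp
  show ?thesis
  proof (cases "cyc s (j + 1) = SX")
    case True
    \<comment> \<open>Then j + 1 starts an X-block of s of length L - 1 whose left neighbour is s ! j.\<close>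
    have "L \<noteq> 1"
      using True right other[of 1] n2 by (auto simp: t_def)
    then have "0 < L - 1"
      using L by simp
    moreover have "cyc s (j + 1 + n - 1) = s ! j"
      using cyc_add_length[of s j] n2 by (simp add: n_def cyc_nth[OF j[unfolded n_def]])
    moreover have "\<forall>k<L - 1. cyc s (j + 1 + k) = SX"
    proof (intro allI impI)
      fix k
      assume "k < L - 1"
      then show "cyc s (j + 1 + k) = SX"
        using run[rule_format, of "1 + k"] other[of "1 + k"] \<open>L < n\<close> by (simp add: t_def)
    qed
    moreover have "cyc s (j + 1 + (L - 1)) = cyc t (j + L)"
      using right_s L by simp
    ultimately have "cyc s (j + 1 + n - 1) \<noteq> cyc s (j + 1 + (L - 1))"
      using ok j bit right unfolding n_def t_def
      by (intro X_blocks_okD) auto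
    then show ?thesis
      using \<open>cyc s (j + 1 + n - 1) = s ! j\<close> \<open>cyc s (j + 1 + (L - 1)) = cyc t (j + L)\<close>
      by (simp add: t_def)
  next
    case False
    have "\<not> 1 < L"
    proof
      assume "1 < L"
      then have "cyc t (j + 1) = SX"
        using run[rule_format, of 1] by (simp add: t_def)
      then show False
        using False other[of 1] n2 by simp
    qed
    then have "L = 1"
      using L by simp
    then show ?thesis
      using other[of 1] n2 succ_j by (simp add: t_def)
  qed
qed

lemma X_blocks_ok_update_long_block_end:
  assumes ok: "X_blocks_ok s" and block_end: "long_block_end s j" and bit: "s ! j \<noteq> SX"
  shows "X_blocks_ok (s[j := SX])"
proof -
  define n where "n = length s"
  define t where "t = s[j := SX]"
  have j: "j < n" and n2: "2 \<le> n"
    using block_end long_block_end_length by (auto simp: long_block_end_def n_def)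
  have len_t: "length t = n"
    by (simp add: t_def n_def)
  have ct: "cyc t i = (if i mod n = j then SX else cyc s i)" for i
    using j cyc_list_update by (simp add: t_def n_def)
  have t_pred_j: "cyc t (j + n - 1) = s ! j"
    using cyc_update_long_block_end_pred[OF block_end] by (simp add: t_def n_def)
  have "(j + n - 1) mod n < n"
    using n2 by simp
  moreover have "t ! ((j + n - 1) mod n) = s ! j"
    using t_pred_j len_t by (simp add: cyc_def)
  ultimately have not_all_X: "\<not> (\<forall>i<length t. t ! i = SX)"
    using bit len_t by metis
  have blocks: "cyc t (i + n - 1) \<noteq> cyc t (i + L)"
    if i: "i < n" and L: "0 < L" and left: "cyc t (i + n - 1) \<noteq> SX"
      and run: "\<forall>k<L. cyc t (i + k) = SX" and right: "cyc t (i + L) \<noteq> SX" for i L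
  proof (cases "\<exists>k<L. (i + k) mod n = j")
    case True
    then obtain k where k: "k < L" "(i + k) mod n = j"
      by blast
    have "k = 0"
      using X_run_through_update_starts_there[OF block_end bit, of L i k] run k
      by (simp add: t_def n_def)
    then have "i = j"
      using k(2) i by simp
    then show ?thesis
      using X_block_after_update_long_block_end[OF ok block_end bit L] run right t_pred_j
      by (simp add: t_def)
  next
    case False
    then have "\<forall>k<L. cyc s (i + k) = SX"
      using run ct by simp
    moreover have "cyc t (i + n - 1) = cyc s (i + n - 1)" and "cyc t (i + L) = cyc s (i + L)"
      using ct left right by (auto split: if_splits)
    moreover have "s \<noteq> []"
      using j by (auto simp: n_def)
    ultimately show ?thesis
      using X_blocks_okD[OF ok _ L, of i] left right by (simp add: n_def)
  qed
  show ?thesis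
    unfolding X_blocks_ok_def t_def[symmetric] len_t
  proof (intro conjI allI impI)
    show "t = []" if "\<forall>i<n. t ! i = SX"
      using that not_all_X len_t by simp
    show "cyc t (i + n - 1) \<noteq> cyc t (i + L)"
      if "i < n \<and> 0 < L \<and> cyc t (i + n - 1) \<noteq> SX \<and> (\<forall>k<L. cyc t (i + k) = SX)
        \<and> cyc t (i + L) \<noteq> SX" for i L
      using that blocks by (elim conjE) simp
  qed
qed

lemma cellular_update_long_block_end:
  assumes "cellular N M s" "long_block_end s j" "s ! j \<noteq> SX"
  shows "cellular N M (s[j := SX])"
  using assms X_blocks_ok_update_long_block_end num_blocks_update_long_block_end
  by (simp add: cellular_def)

lemma str_less_update_bit:
  assumes "j < length s" "s ! j \<noteq> SX"
  shows "str_less s (s[j := SX])"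
  using assms by (auto simp: str_less_def nth_list_update) (metis nth_list_update_eq)

theorem proposition3p2:
  fixes N M :: nat
  assumes "0 < M" and "2 * M < N"
  shows "{s. maximal_in (Str N M) s} = {s \<in> Str N M. dimension s = N - 2 * M}"
proof (intro set_eqI iffI)
  fix s
  assume "s \<in> {s. maximal_in (Str N M) s}"
  then have c: "cellular N M s" and maximal: "\<And>t. cellular N M t \<Longrightarrow> \<not> str_less s t"
    by (auto simp: maximal_in_def Str_def)
  have "\<not> dimension s + 2 * M < N"
  proof
    assume "dimension s + 2 * M < N"
    then obtain j where j: "long_block_end s j" "s ! j \<noteq> SX"
      using cellular_exists_long_block_end[OF c \<open>0 < M\<close>] by blast
    then have "str_less s (s[j := SX])"
      by (simp add: long_block_end_def str_less_update_bit)
    then show False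
      using maximal cellular_update_long_block_end[OF c j] by blast
  qed
  then show "s \<in> {s \<in> Str N M. dimension s = N - 2 * M}"
    using c cellular_dimension_le[OF c \<open>0 < M\<close>] by (simp add: Str_def)
next
  fix s
  assume "s \<in> {s \<in> Str N M. dimension s = N - 2 * M}"
  then have c: "cellular N M s" and dim: "dimension s = N - 2 * M"
    by (auto simp: Str_def)
  have "\<not> str_less s t" if "cellular N M t" for t
  proof
    assume "str_less s t"
    then have "dimension s < dimension t"
      by (rule str_less_dimension_less)
    then show False
      using cellular_dimension_le[OF that \<open>0 < M\<close>] dim by simp
  qed
  then show "s \<in> {s. maximal_in (Str N M) s}"
    using c by (auto simp: maximal_in_def Str_def)
qed

end
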